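(* Let $d,k\ge1$, $0<\alpha<1$, $v>0$, $\eta>0$, $R>0$. Let $S=\{(\mathbf{x}_1,y_1),\dots,(\mathbf{x}_n,y_n)\}$ with $\|\mathbf{x}_i\|\le 1$, $y_i\in\{\pm1\}$, and suppose $\mathbf{w}^*\in\mathbb{R}^d$ satisfies $y_i\langle\mathbf{w}^*,\mathbf{x}_i\rangle\ge 1$ for all $i$. Run SGD (as described in the context) on $L_S$ starting from $W_0$ whose rows all have Euclidean norm at most $R$. Then SGD converges to a global minimum of $L_S$ after performing at most $$M_k=\frac{\|\mathbf{w}^*\|^2}{\alpha^2}+\frac{\|\mathbf{w}^*\|^2}{k\eta v^2\alpha^2}+\frac{\sqrt{R(8k^2\eta^2v^2+8\eta k)}\,\|\mathbf{w}^*\|^{1.5}}{2k(\eta v\alpha)^{1.5}}+\frac{2R\|\mathbf{w}^*\|}{\eta v\alpha}$$ non-zero updates.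
   Context: The network is $N_W(\mathbf{x})=\mathbf{v}^\top\sigma(W\mathbf{x})$ with $W\in\mathbb{R}^{2k\times d}$, $\sigma(z)=\max\{\alpha z,z\}$ (Leaky ReLU) applied entrywise, and fixed second layer $\mathbf{v}=(v,\dots,v,-v,\dots,-v)\in\mathbb{R}^{2k}$ ($k$ copies of $v$ then $k$ copies of $-v$). The loss is $L_S(W)=\frac1n\sum_i\max\{1-y_iN_W(\mathbf{x}_i),0\}$. Write $\mathbf{w}^{(i)}_t$ for the $i$-th row and $\mathbf{u}^{(i)}_t$ for the $(k+i)$-th row of $W_t$ ($1\le i\le k$). SGD with batch size 1 and constant learning rate $\eta$ only updates $W$: at iteration $t$ it picks an example $(\mathbf{x}_t,y_t)\in S$ and sets $W_t=W_{t-1}-\eta\,\partial_W \max\{1-y_tN_{W_{t-1}}(\mathbf{x}_t),0\}$. Concretely, if $y_tN_{W_{t-1}}(\mathbf{x}_t)\ge1$ nothing changes; otherwise $\mathbf{w}^{(i)}_t=\mathbf{w}^{(i)}_{t-1}+\eta v p^{(i)}_t y_t\mathbf{x}_t$ and $\mathbf{u}^{(i)}_t=\mathbf{u}^{(i)}_{t-1}-\eta v q^{(i)}_t y_t\mathbf{x}_t$, where $p^{(i)}_t=1$ if $\langle\mathbf{w}^{(i)}_{t-1},\mathbf{x}_t\rangle\ge0$ and $\alpha$ otherwise, and $q^{(i)}_t=1$ if $\langle\mathbf{u}^{(i)}_{t-1},\mathbf{x}_t\rangle\ge0$ and $\alpha$ otherwise. An update is non-zero if this gradient is nonzero (equivalently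 $y_tN_{W_{t-1}}(\mathbf{x}_t)<1$). *)

theory Defs
  imports "HOL-Analysis.Analysis"
begin

text \<open>Weights W of the first layer: a pair (w, u) where w i is the i-th row and
  u i is the (k+i)-th row, for i < k (0-based indices; indices \<ge> k are ignored).\<close>
type_synonym 'a weights = "(nat \<Rightarrow> 'a) \<times> (nat \<Rightarrow> 'a)"

definition leaky_relu :: "real \<Rightarrow> real \<Rightarrow> real" where
  "leaky_relu \<alpha> z = max (\<alpha> * z) z"

definition net :: "nat \<Rightarrow> real \<Rightarrow> real \<Rightarrow> 'a::real_inner weights \<Rightarrow> 'a \<Rightarrow> real" where
  "net k \<alpha> v W x =
     (\<Sum>i<k. v * leaky_relu \<alpha> (inner (fst W i) x)) +
     (\<Sum>i<k. (- v) * leaky_relu \<alpha> (inner (snd W i) x))"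

definition loss :: "nat \<Rightarrow> real \<Rightarrow> real \<Rightarrow> nat \<Rightarrow> (nat \<Rightarrow> 'a::real_inner) \<Rightarrow> (nat \<Rightarrow> real)
                     \<Rightarrow> 'a weights \<Rightarrow> real" where
  "loss k \<alpha> v n xs ys W = (1 / real n) * (\<Sum>i<n. max (1 - ys i * net k \<alpha> v W (xs i)) 0)"

definition sgd_step :: "nat \<Rightarrow> real \<Rightarrow> real \<Rightarrow> real \<Rightarrow> 'a::real_inner weights \<Rightarrow> 'a \<Rightarrow> real
                        \<Rightarrow> 'a weights" where
  "sgd_step k \<alpha> v \<eta> W x y =
     (if y * net k \<alpha> v W x \<ge> 1 then W
      else ((\<lambda>i. fst W i + (\<eta> * v * (if inner (fst W i) x \<ge> 0 then 1 else \<alpha>) * y) *\<^sub>R x),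
            (\<lambda>i. snd W i - (\<eta> * v * (if inner (snd W i) x \<ge> 0 then 1 else \<alpha>) * y) *\<^sub>R x)))"

fun sgd :: "nat \<Rightarrow> real \<Rightarrow> real \<Rightarrow> real \<Rightarrow> (nat \<Rightarrow> 'a::real_inner) \<Rightarrow> (nat \<Rightarrow> real)
            \<Rightarrow> (nat \<Rightarrow> nat) \<Rightarrow> 'a weights \<Rightarrow> nat \<Rightarrow> 'a weights" where
  "sgd k \<alpha> v \<eta> xs ys c W0 0 = W0"
| "sgd k \<alpha> v \<eta> xs ys c W0 (Suc t) =
     sgd_step k \<alpha> v \<eta> (sgd k \<alpha> v \<eta> xs ys c W0 t) (xs (c (Suc t))) (ys (c (Suc t)))"

definition nonzero_updates :: "nat \<Rightarrow> real \<Rightarrow> real \<Rightarrow> real \<Rightarrow> (nat \<Rightarrow> 'a::real_inner) \<Rightarrow> (nat \<Rightarrow> real)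
            \<Rightarrow> (nat \<Rightarrow> nat) \<Rightarrow> 'a weights \<Rightarrow> nat set" where
  "nonzero_updates k \<alpha> v \<eta> xs ys c W0 =
     {t. t \<ge> 1 \<and> ys (c t) * net k \<alpha> v (sgd k \<alpha> v \<eta> xs ys c W0 (t - 1)) (xs (c t)) < 1}"

definition bound_Mk :: "nat \<Rightarrow> real \<Rightarrow> real \<Rightarrow> real \<Rightarrow> real \<Rightarrow> real \<Rightarrow> real" where
  "bound_Mk k \<alpha> v \<eta> R B =
     B^2 / \<alpha>^2 + B^2 / (real k * \<eta> * v^2 * \<alpha>^2)
     + sqrt (R * (8 * (real k)^2 * \<eta>^2 * v^2 + 8 * \<eta> * real k)) * B powr (3/2)
         / (2 * real k * (\<eta> * v * \<alpha>) powr (3/2))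
     + 2 * R * B / (\<eta> * v * \<alpha>)"

end

theory Submission
  imports Defs
begin

text \<open>A perceptron-style argument. Let W* be the weight matrix whose first k rows are w* and whose
  last k rows are -w*; alignment k w* W is the Frobenius inner product of W and W*. A non-zero
  update on (x, y) raises it by at least 2k\<eta>v\<alpha>, since every slope of the Leaky ReLU is at least
  \<alpha> and y<w*, x> \<ge> 1; it raises the squared Frobenius norm of W by at most 2\<eta> + 2k(\<eta>v)^2,
  since the cross term equals 2\<eta>y N(x) < 2\<eta>. By Cauchy-Schwarz the squared alignment is at most
  2k |w*|^2 times the squared Frobenius norm, so after m updates the linear lower bound and the
  linear upper bound yield a quadratic inequality in m, which bounds m. After the last update SGD
  is stationary, and every example visited afterwards has margin at least 1.\<close>

definition alignment :: "nat \<Rightarrow> 'a::real_inner \<Rightarrow> 'a weights \<Rightarrow> real" where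
  "alignment k ws W = (\<Sum>i<k. inner (fst W i) ws - inner (snd W i) ws)"

definition frobenius_sq :: "nat \<Rightarrow> 'a::real_inner weights \<Rightarrow> real" where
  "frobenius_sq k W = (\<Sum>i<k. norm (fst W i)^2 + norm (snd W i)^2)"

lemma leaky_relu_eq_slope_mult:
  assumes "\<alpha> \<le> 1"
  shows "leaky_relu \<alpha> z = (if z \<ge> 0 then 1 else \<alpha>) * z"
  using assms mult_right_mono[of \<alpha> 1 z] mult_right_mono_neg[of \<alpha> 1 z]
  by (auto simp: leaky_relu_def max_def)

lemma sgd_step_update:
  assumes "y * net k \<alpha> v W x < 1"
  shows "sgd_step k \<alpha> v \<eta> W x y =
     ((\<lambda>i. fst W i + (\<eta> * v * (if inner (fst W i) x \<ge> 0 then 1 else \<alpha>) * y) *\<^sub>R x),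
      (\<lambda>i. snd W i - (\<eta> * v * (if inner (snd W i) x \<ge> 0 then 1 else \<alpha>) * y) *\<^sub>R x))"
  using assms by (simp add: sgd_step_def)

lemma alignment_sgd_step_ge:
  assumes "y * net k \<alpha> v W x < 1" and "1 \<le> y * inner ws x"
    and "0 < \<alpha>" "\<alpha> \<le> 1" "0 < v" "0 < \<eta>"
  shows "alignment k ws W + 2 * real k * (\<eta> * v * \<alpha>) \<le> alignment k ws (sgd_step k \<alpha> v \<eta> W x y)"
proof -
  have gain: "\<eta> * v * \<alpha> \<le> \<eta> * v * s * (y * inner ws x)" if "s = 1 \<or> s = \<alpha>" for s
  proof -
    have nonneg: "0 \<le> \<eta> * v * s" using that assms(3,5,6) by auto
    have "\<eta> * v * \<alpha> \<le> \<eta> * v * s" using that assms(4-6) by auto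
    also have "\<dots> \<le> \<eta> * v * s * (y * inner ws x)"
      using mult_left_mono[OF assms(2) nonneg] by simp
    finally show ?thesis .
  qed
  have row: "inner w ws - inner u ws + 2 * (\<eta> * v * \<alpha>)
      \<le> inner (w + (\<eta> * v * s * y) *\<^sub>R x) ws - inner (u - (\<eta> * v * r * y) *\<^sub>R x) ws"
    if "s = 1 \<or> s = \<alpha>" "r = 1 \<or> r = \<alpha>" for w u s r
    using gain[OF that(1)] gain[OF that(2)]
    by (simp add: inner_add_left inner_diff_left inner_commute algebra_simps)
  have "alignment k ws W + 2 * real k * (\<eta> * v * \<alpha>)
      = (\<Sum>i<k. inner (fst W i) ws - inner (snd W i) ws + 2 * (\<eta> * v * \<alpha>))"
    by (simp add: alignment_def sum.distrib)
  also have "\<dots> \<le> alignment k ws (sgd_step k \<alpha> v \<eta> W x y)"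
    unfolding sgd_step_update[OF assms(1)] alignment_def fst_conv snd_conv
    by (rule sum_mono, rule row) simp_all
  finally show ?thesis .
qed

lemma norm_add_scaleR_sq_le:
  fixes w x :: "'a::real_inner"
  assumes "norm x \<le> 1" and "\<bar>t\<bar> \<le> b"
  shows "norm (w + t *\<^sub>R x)^2 \<le> norm w^2 + 2 * t * inner w x + b^2"
proof -
  have "\<bar>t * norm x\<bar> \<le> b"
    using assms mult_mono[of "\<bar>t\<bar>" b "norm x" 1] by (simp add: abs_mult)
  then have "(t * norm x)^2 \<le> b^2"
    by (metis abs_le_square_iff abs_of_nonneg abs_ge_zero order_trans)
  then show ?thesis
    by (simp add: power2_norm_eq_inner inner_add_left inner_add_right inner_commute power_mult_distrib)
      (simp add: power2_eq_square mult.assoc)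
qed

lemma frobenius_sq_sgd_step_le:
  fixes x :: "'a::real_inner"
  assumes "y * net k \<alpha> v W x < 1" and "\<bar>y\<bar> \<le> 1" "norm x \<le> 1"
    and "0 \<le> \<alpha>" "\<alpha> \<le> 1" "0 < v" "0 < \<eta>"
  shows "frobenius_sq k (sgd_step k \<alpha> v \<eta> W x y)
    \<le> frobenius_sq k W + (2 * \<eta> + 2 * real k * (\<eta> * v)^2)"
proof -
  define s where "s z = (if z \<ge> 0 then 1 else \<alpha>)" for z :: real
  have lr: "leaky_relu \<alpha> z = s z * z" for z
    unfolding s_def by (rule leaky_relu_eq_slope_mult[OF assms(5)])
  have step: "\<bar>\<eta> * v * s z * y\<bar> \<le> \<eta> * v" for z
  proof -
    have "\<bar>s z * y\<bar> \<le> 1"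
      using assms(2,4,5) mult_mono[of "\<bar>s z\<bar>" 1 "\<bar>y\<bar>" 1] by (simp add: s_def abs_mult)
    then show ?thesis
      using assms(6,7) mult_left_mono[of "\<bar>s z * y\<bar>" 1 "\<eta> * v"] by (simp add: abs_mult mult.assoc)
  qed
  have "frobenius_sq k (sgd_step k \<alpha> v \<eta> W x y)
      \<le> (\<Sum>i<k. norm (fst W i)^2 + 2 * (\<eta> * v * s (inner (fst W i) x) * y) * inner (fst W i) x + (\<eta> * v)^2
               + (norm (snd W i)^2 + 2 * (- (\<eta> * v * s (inner (snd W i) x) * y)) * inner (snd W i) x + (\<eta> * v)^2))"
    unfolding sgd_step_update[OF assms(1)] frobenius_sq_def fst_conv snd_conv s_def[symmetric]
  proof (rule sum_mono, rule add_mono)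
    fix i
    show "norm (fst W i + (\<eta> * v * s (inner (fst W i) x) * y) *\<^sub>R x)^2
        \<le> norm (fst W i)^2 + 2 * (\<eta> * v * s (inner (fst W i) x) * y) * inner (fst W i) x + (\<eta> * v)^2"
      by (rule norm_add_scaleR_sq_le[OF assms(3) step])
    show "norm (snd W i - (\<eta> * v * s (inner (snd W i) x) * y) *\<^sub>R x)^2
        \<le> norm (snd W i)^2 + 2 * (- (\<eta> * v * s (inner (snd W i) x) * y)) * inner (snd W i) x + (\<eta> * v)^2"
      using norm_add_scaleR_sq_le[OF assms(3), of "- (\<eta> * v * s (inner (snd W i) x) * y)" "\<eta> * v" "snd W i"] step
      by simp
  qed
  also have "\<dots> = (\<Sum>i<k. (norm (fst W i)^2 + norm (snd W i)^2)
      + 2 * \<eta> * y * (v * leaky_relu \<alpha> (inner (fst W i) x) + (- v) * leaky_relu \<alpha> (inner (snd W i) x))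
      + 2 * (\<eta> * v)^2)"
    by (intro sum.cong refl) (simp add: lr algebra_simps)
  also have "\<dots> = frobenius_sq k W + 2 * \<eta> * (y * net k \<alpha> v W x) + 2 * real k * (\<eta> * v)^2"
    by (simp only: frobenius_sq_def net_def sum.distrib sum_distrib_left sum_constant)
      (simp add: sum_subtractf sum_negf sum_distrib_left algebra_simps)
  also have "\<dots> \<le> frobenius_sq k W + (2 * \<eta> + 2 * real k * (\<eta> * v)^2)"
    using assms(1,7) by simp
  finally show ?thesis .
qed

lemma abs_alignment_le:
  "\<bar>alignment k ws W\<bar> \<le> norm ws * (\<Sum>i<k. norm (fst W i) + norm (snd W i))"
  unfolding alignment_def sum_distrib_left
proof (rule order_trans[OF sum_abs sum_mono])
  fix i
  have "\<bar>inner (fst W i) ws\<bar> \<le> norm (fst W i) * norm ws"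
    and "\<bar>inner (snd W i) ws\<bar> \<le> norm (snd W i) * norm ws"
    by (rule Cauchy_Schwarz_ineq2)+
  then show "\<bar>inner (fst W i) ws - inner (snd W i) ws\<bar> \<le> norm ws * (norm (fst W i) + norm (snd W i))"
    by (simp add: algebra_simps)
qed

lemma sum_row_norms_sq_le:
  "(\<Sum>i<k. norm (fst W i) + norm (snd W i))^2 \<le> 2 * real k * frobenius_sq k W"
proof -
  have "(\<Sum>i<k. norm (fst W i) + norm (snd W i))^2 \<le> real k * (\<Sum>i<k. (norm (fst W i) + norm (snd W i))^2)"
    using sum_squared_le_sum_of_squares[of "\<lambda>i. norm (fst W i) + norm (snd W i)" "{..<k}"] by (simp add: mult.commute)
  also have "\<dots> \<le> real k * (\<Sum>i<k. 2 * (norm (fst W i)^2 + norm (snd W i)^2))"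
    by (intro mult_left_mono sum_mono) (simp_all add: power2_sum add.commute sum_squares_bound)
  also have "\<dots> = 2 * real k * frobenius_sq k W"
    by (simp add: frobenius_sq_def sum_distrib_left algebra_simps)
  finally show ?thesis .
qed

lemma alignment_sq_le:
  "(alignment k ws W)^2 \<le> 2 * real k * norm ws^2 * frobenius_sq k W"
proof -
  have "(alignment k ws W)^2 = \<bar>alignment k ws W\<bar>^2"
    by simp
  also have "\<dots> \<le> (norm ws * (\<Sum>i<k. norm (fst W i) + norm (snd W i)))^2"
    by (rule power_mono[OF abs_alignment_le abs_ge_zero])
  also have "\<dots> \<le> norm ws^2 * (2 * real k * frobenius_sq k W)"
    by (simp add: power_mult_distrib mult_left_mono sum_row_norms_sq_le)
  finally show ?thesis by (simp add: algebra_simps)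
qed

lemma sum_row_norms_le:
  assumes "\<forall>i<k. norm (fst W i) \<le> R \<and> norm (snd W i) \<le> R"
  shows "(\<Sum>i<k. norm (fst W i) + norm (snd W i)) \<le> 2 * real k * R"
proof -
  have "(\<Sum>i<k. norm (fst W i) + norm (snd W i)) \<le> (\<Sum>i<k. 2 * R)"
  proof (rule sum_mono)
    fix i assume "i \<in> {..<k}"
    with assms show "norm (fst W i) + norm (snd W i) \<le> 2 * R" by auto
  qed
  then show ?thesis by (simp add: algebra_simps)
qed

lemma frobenius_sq_le:
  assumes "\<forall>i<k. norm (fst W i) \<le> R \<and> norm (snd W i) \<le> R"
  shows "frobenius_sq k W \<le> 2 * real k * R^2"
proof -
  have "norm (fst W i)^2 + norm (snd W i)^2 \<le> 2 * R^2" if "i < k" for i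
    using assms that power_mono[of "norm (fst W i)" R 2] power_mono[of "norm (snd W i)" R 2] by auto
  then show ?thesis
    using sum_mono[of "{..<k}" "\<lambda>i. norm (fst W i)^2 + norm (snd W i)^2" "\<lambda>_. 2 * R^2"]
    by (simp add: frobenius_sq_def)
qed

lemma bound_from_quadratic_ineq:
  fixes a b r e m :: real
  assumes "0 < a" "0 \<le> b" "0 \<le> r" "0 \<le> e"
    and "r * b < a * m \<Longrightarrow> (a * m - r * b)^2 \<le> b^2 * (r^2 + m * e)"
  shows "m \<le> 2 * r * b / a + b^2 * e / a^2"
proof (cases "a * m \<le> r * b")
  case True
  then have "m \<le> r * b / a" using assms(1) by (simp add: pos_le_divide_eq mult.commute)
  also have "\<dots> \<le> 2 * r * b / a" using assms(1-3) by (simp add: divide_right_mono)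
  also have "\<dots> \<le> 2 * r * b / a + b^2 * e / a^2" using assms(4) by simp
  finally show ?thesis .
next
  case False
  then have "0 < a * m" using assms(2,3) mult_nonneg_nonneg[of r b] by linarith
  then have "0 < m" using assms(1) by (simp add: zero_less_mult_iff)
  from False have "(a * m - r * b)^2 \<le> b^2 * (r^2 + m * e)" using assms(5) by simp
  then have "m * (a^2 * m) \<le> m * (2 * a * r * b + b^2 * e)"
    by (simp add: power2_eq_square algebra_simps)
  then have "a^2 * m \<le> 2 * a * r * b + b^2 * e" using \<open>0 < m\<close> by simp
  then have "m \<le> (2 * a * r * b + b^2 * e) / a^2" using assms(1) by (simp add: pos_le_divide_eq mult.commute)
  also have "\<dots> = 2 * r * b / a + b^2 * e / a^2" using assms(1) by (simp add: add_divide_distrib power2_eq_square)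
  finally show ?thesis .
qed

lemma nonzero_updates_Suc_iff:
  "Suc t \<in> nonzero_updates k \<alpha> v \<eta> xs ys c W0 \<longleftrightarrow>
     ys (c (Suc t)) * net k \<alpha> v (sgd k \<alpha> v \<eta> xs ys c W0 t) (xs (c (Suc t))) < 1"
  by (simp add: nonzero_updates_def)

lemma sgd_Suc_eq_if_no_update:
  "Suc t \<notin> nonzero_updates k \<alpha> v \<eta> xs ys c W0 \<Longrightarrow>
    sgd k \<alpha> v \<eta> xs ys c W0 (Suc t) = sgd k \<alpha> v \<eta> xs ys c W0 t"
  by (simp add: nonzero_updates_Suc_iff sgd_step_def)

lemma sgd_potential_growth:
  fixes f :: "'a::real_inner weights \<Rightarrow> real"
  assumes "\<And>W t. ys (c (Suc t)) * net k \<alpha> v W (xs (c (Suc t))) < 1 \<Longrightarrow>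
      f W + \<delta> \<le> f (sgd_step k \<alpha> v \<eta> W (xs (c (Suc t))) (ys (c (Suc t))))"
  shows "f W0 + real (card (nonzero_updates k \<alpha> v \<eta> xs ys c W0 \<inter> {..t})) * \<delta>
    \<le> f (sgd k \<alpha> v \<eta> xs ys c W0 t)"
proof (induction t)
  case 0
  have "nonzero_updates k \<alpha> v \<eta> xs ys c W0 \<inter> {..0} = {}"
    by (auto simp: nonzero_updates_def)
  then show ?case by simp
next
  case (Suc t)
  let ?A = "nonzero_updates k \<alpha> v \<eta> xs ys c W0"
  show ?case
  proof (cases "Suc t \<in> ?A")
    case True
    then have "?A \<inter> {..Suc t} = insert (Suc t) (?A \<inter> {..t})" by (auto simp: le_Suc_eq)
    then show ?thesis
      using Suc.IH assms[of t "sgd k \<alpha> v \<eta> xs ys c W0 t"] True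
      by (simp add: nonzero_updates_Suc_iff algebra_simps)
  next
    case False
    then have "?A \<inter> {..Suc t} = ?A \<inter> {..t}" by (auto simp: le_Suc_eq)
    then show ?thesis using Suc.IH sgd_Suc_eq_if_no_update[OF False] by (simp del: sgd.simps)
  qed
qed

lemma card_nonzero_updates_upto_le:
  fixes xs :: "nat \<Rightarrow> 'a::real_inner" and wstar :: 'a
  assumes "0 < k" "0 < \<alpha>" "\<alpha> \<le> 1" "0 < v" "0 < \<eta>" "0 \<le> R"
    and "\<forall>i<n. norm (xs i) \<le> 1" "\<forall>i<n. \<bar>ys i\<bar> \<le> 1"
    and "\<forall>i<n. 1 \<le> ys i * inner wstar (xs i)"
    and "\<forall>t. c t < n" "\<forall>i<k. norm (fst W0 i) \<le> R \<and> norm (snd W0 i) \<le> R"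
  shows "real (card (nonzero_updates k \<alpha> v \<eta> xs ys c W0 \<inter> {..t}))
    \<le> 2 * R * norm wstar / (\<eta> * v * \<alpha>)
      + norm wstar^2 * (\<eta> / real k + (\<eta> * v)^2) / (\<eta> * v * \<alpha>)^2"
proof -
  define W where "W = sgd k \<alpha> v \<eta> xs ys c W0 t"
  define m where "m = real (card (nonzero_updates k \<alpha> v \<eta> xs ys c W0 \<inter> {..t}))"
  define a where "a = \<eta> * v * \<alpha>"
  define e where "e = \<eta> / real k + (\<eta> * v)^2"
  define B where "B = norm wstar"
  have sample: "norm (xs (c t')) \<le> 1" "\<bar>ys (c t')\<bar> \<le> 1" "1 \<le> ys (c t') * inner wstar (xs (c t'))" for t'
    using assms(7-10) by auto
  have "alignment k wstar W0 + m * (2 * real k * a) \<le> alignment k wstar W"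
    unfolding W_def m_def a_def
    by (rule sgd_potential_growth[where f = "alignment k wstar"], rule alignment_sgd_step_ge)
      (use assms(2-5) sample in auto)
  moreover have "\<bar>alignment k wstar W0\<bar> \<le> B * (2 * real k * R)"
    unfolding B_def by (rule order_trans[OF abs_alignment_le mult_left_mono[OF sum_row_norms_le[OF assms(11)]]]) simp
  ultimately have P: "2 * real k * (a * m - R * B) \<le> alignment k wstar W"
    by (simp add: algebra_simps abs_le_iff)
  have "- frobenius_sq k W0 + m * (- (2 * \<eta> + 2 * real k * (\<eta> * v)^2)) \<le> - frobenius_sq k W"
    unfolding W_def m_def
  proof (rule sgd_potential_growth[where f = "\<lambda>W. - frobenius_sq k W"])
    fix W' t' assume "ys (c (Suc t')) * net k \<alpha> v W' (xs (c (Suc t'))) < 1"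
    from frobenius_sq_sgd_step_le[OF this sample(2) sample(1) less_imp_le[OF assms(2)] assms(3-5)]
    show "- frobenius_sq k W' + - (2 * \<eta> + 2 * real k * (\<eta> * v)^2)
        \<le> - frobenius_sq k (sgd_step k \<alpha> v \<eta> W' (xs (c (Suc t'))) (ys (c (Suc t'))))"
      by linarith
  qed
  then have Q: "frobenius_sq k W \<le> 2 * real k * (R^2 + m * e)"
    using frobenius_sq_le[OF assms(11)] assms(1) by (simp add: e_def algebra_simps)
  show ?thesis
    unfolding m_def[symmetric] a_def[symmetric] e_def[symmetric] B_def[symmetric]
  proof (rule bound_from_quadratic_ineq)
    assume "R * B < a * m"
    then have "0 \<le> 2 * real k * (a * m - R * B)" by simp
    then have "(2 * real k)^2 * (a * m - R * B)^2 \<le> (alignment k wstar W)^2"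
      using power_mono[OF P, of 2] by (simp add: power_mult_distrib)
    also have "\<dots> \<le> 2 * real k * B^2 * (2 * real k * (R^2 + m * e))"
      unfolding B_def by (rule order_trans[OF alignment_sq_le mult_left_mono[OF Q]]) simp
    also have "\<dots> = (2 * real k)^2 * (B^2 * (R^2 + m * e))"
      by (simp add: power2_eq_square)
    finally show "(a * m - R * B)^2 \<le> B^2 * (R^2 + m * e)"
      using assms(1) by simp
  qed (use assms in \<open>auto simp: a_def e_def B_def\<close>)
qed

lemma bound_Mk_ge:
  assumes "0 < k" "0 < \<alpha>" "0 < v" "0 < \<eta>" "0 \<le> R" "0 \<le> B"
  shows "2 * R * B / (\<eta> * v * \<alpha>) + B^2 * (\<eta> / real k + (\<eta> * v)^2) / (\<eta> * v * \<alpha>)^2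
    \<le> bound_Mk k \<alpha> v \<eta> R B"
proof -
  have "B^2 * (\<eta> / real k + (\<eta> * v)^2) / (\<eta> * v * \<alpha>)^2
      = B^2 / \<alpha>^2 + B^2 / (real k * \<eta> * v^2 * \<alpha>^2)"
    using assms(1-4) by (simp add: field_simps power2_eq_square)
  moreover have "0 \<le> sqrt (R * (8 * (real k)^2 * \<eta>^2 * v^2 + 8 * \<eta> * real k)) * B powr (3/2)
      / (2 * real k * (\<eta> * v * \<alpha>) powr (3/2))"
    using assms by simp
  ultimately show ?thesis
    unfolding bound_Mk_def by linarith
qed

lemma finite_card_le_if_initial_segments_le:
  fixes A :: "nat set" and M :: real
  assumes "\<And>t. real (card (A \<inter> {..t})) \<le> M"
  shows "finite A \<and> real (card A) \<le> M"
proof -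
  have "finite A"
  proof (rule ccontr)
    assume "infinite A"
    then obtain F where F: "F \<subseteq> A" "finite F" "card F = nat \<lceil>M\<rceil> + 1"
      using infinite_arbitrarily_large by blast
    then have "F \<subseteq> A \<inter> {..Max F}" by auto
    then have "card F \<le> card (A \<inter> {..Max F})" by (intro card_mono) auto
    then have "real (card F) \<le> M" using assms[of "Max F"] by linarith
    moreover have "M < real (card F)" using F(3) real_nat_ceiling_ge[of M] by simp
    ultimately show False by simp
  qed
  then obtain t where "A \<subseteq> {..t}" using finite_nat_iff_bounded_le by blast
  then have "A \<inter> {..t} = A" by blast
  then show ?thesis using \<open>finite A\<close> assms[of t] by simp
qed

lemma sgd_constant_after_last_update:
  assumes "\<forall>t'\<in>nonzero_updates k \<alpha> v \<eta> xs ys c W0. t' \<le> T" and "T \<le> t"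
  shows "sgd k \<alpha> v \<eta> xs ys c W0 t = sgd k \<alpha> v \<eta> xs ys c W0 T"
  using assms(2)
proof (induction t rule: dec_induct)
  case (step t)
  then have "T < Suc t" by simp
  then have "Suc t \<notin> nonzero_updates k \<alpha> v \<eta> xs ys c W0" using assms(1) leD by blast
  then show ?case using step.IH sgd_Suc_eq_if_no_update by metis
qed simp

lemma margin_after_last_update:
  assumes "\<forall>t'\<in>nonzero_updates k \<alpha> v \<eta> xs ys c W0. t' \<le> T" and "T < t"
  shows "1 \<le> ys (c t) * net k \<alpha> v (sgd k \<alpha> v \<eta> xs ys c W0 T) (xs (c t))"
proof -
  obtain t0 where t: "t = Suc t0" using assms(2) by (cases t) auto
  then have "T \<le> t0" using assms(2) by simp
  have "t \<notin> nonzero_updates k \<alpha> v \<eta> xs ys c W0" using assms leD by blast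
  then show ?thesis
    unfolding t nonzero_updates_Suc_iff sgd_constant_after_last_update[OF assms(1) \<open>T \<le> t0\<close>] by simp
qed

lemma loss_nonneg: "0 \<le> loss k \<alpha> v n xs ys W"
  unfolding loss_def by (intro mult_nonneg_nonneg sum_nonneg) auto

lemma loss_eq_0_if_margin:
  assumes "\<forall>i<n. 1 \<le> ys i * net k \<alpha> v W (xs i)"
  shows "loss k \<alpha> v n xs ys W = 0"
  unfolding loss_def using assms by (simp add: sum.neutral)

theorem theorem1:
  fixes xs :: "nat \<Rightarrow> 'a::euclidean_space" and ys :: "nat \<Rightarrow> real"
    and wstar :: 'a and W0 :: "'a weights" and c :: "nat \<Rightarrow> nat"
    and n k :: nat and \<alpha> v \<eta> R :: real
  assumes "k \<ge> 1" and "0 < \<alpha>" and "\<alpha> < 1" and "v > 0" and "\<eta> > 0" and "R > 0"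
    and "\<forall>i<n. norm (xs i) \<le> 1"
    and "\<forall>i<n. ys i = 1 \<or> ys i = -1"
    and "\<forall>i<n. ys i * inner wstar (xs i) \<ge> 1"
    and "\<forall>t. c t < n"
    and "\<forall>i<k. norm (fst W0 i) \<le> R \<and> norm (snd W0 i) \<le> R"
  shows "finite (nonzero_updates k \<alpha> v \<eta> xs ys c W0)
       \<and> real (card (nonzero_updates k \<alpha> v \<eta> xs ys c W0)) \<le> bound_Mk k \<alpha> v \<eta> R (norm wstar)
       \<and> ((\<forall>i<n. \<forall>T. \<exists>t\<ge>T. c t = i) \<longrightarrow>
          (\<exists>T. \<forall>t\<ge>T. sgd k \<alpha> v \<eta> xs ys c W0 t = sgd k \<alpha> v \<eta> xs ys c W0 T
              \<and> (\<forall>W'. loss k \<alpha> v n xs ys (sgd k \<alpha> v \<eta> xs ys c W0 t) \<le> loss k \<alpha> v n xs ys W')))"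
proof -
  let ?A = "nonzero_updates k \<alpha> v \<eta> xs ys c W0" and ?W = "sgd k \<alpha> v \<eta> xs ys c W0"
  have "real (card (?A \<inter> {..t})) \<le> bound_Mk k \<alpha> v \<eta> R (norm wstar)" for t
    using card_nonzero_updates_upto_le[of k \<alpha> v \<eta> R n xs ys wstar c W0 t] assms
      bound_Mk_ge[of k \<alpha> v \<eta> R "norm wstar"]
    by fastforce
  then have finite_card: "finite ?A \<and> real (card ?A) \<le> bound_Mk k \<alpha> v \<eta> R (norm wstar)"
    by (rule finite_card_le_if_initial_segments_le)
  then obtain T where T: "\<forall>t\<in>?A. t \<le> T"
    using finite_nat_iff_bounded_le by auto
  have "\<exists>T. \<forall>t\<ge>T. ?W t = ?W T \<and> (\<forall>W'. loss k \<alpha> v n xs ys (?W t) \<le> loss k \<alpha> v n xs ys W')"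
    if visits: "\<forall>i<n. \<forall>T. \<exists>t\<ge>T. c t = i"
  proof -
    have "1 \<le> ys i * net k \<alpha> v (?W T) (xs i)" if "i < n" for i
      using visits that margin_after_last_update[OF T] by (metis Suc_le_lessD)
    then have "loss k \<alpha> v n xs ys (?W T) = 0"
      by (intro loss_eq_0_if_margin) auto
    then show ?thesis
      using sgd_constant_after_last_update[OF T] loss_nonneg by metis
  qed
  with finite_card show ?thesis by blast
qed

end
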